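(* Let $N$ be a connected component of $\partial\Omega$, use Fermi coordinates $(x',x_{n+1})$ on $\Omega_N=\phi_N(N\times[0,r_{\max,N}))$, in which $p(x,\xi)=|\xi|_g^2=\xi_{n+1}^2+g(x,\xi')$ with $g(x,\cdot)$ a quadratic form in $\xi'$. Fix $\delta>0$ and let $f_\delta\in C^\infty([0,r_{\max,N}])$ satisfy $$\delta\le f_\delta(t)-\sup_{\{(x',\xi'):\,g(t,x',\xi')=1\}}\partial_t g(t,x',\xi')\le 2\delta .$$ Define $\psi_N(x_{n+1})=\int_0^{x_{n+1}}e^{\frac12\int_0^s f_\delta(\tau)d\tau}ds$ and $p_{\psi_N}(x,\xi)=p(x,\xi+i\partial_x\psi_N)$. Then there is $C(\delta)>0$ such that $$\{\operatorname{Re}p_{\psi_N},\operatorname{Im}p_{\psi_N}\}(x,\xi)\ge C(\delta)>0\quad\text{for all }(x,\xi)\in\operatorname{Char}(p_{\psi_N})=\{p_{\psi_N}=0\},\ x\in\Omega_N .$$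
   Context: $(\Omega,g)$ is a compact Riemannian manifold with boundary; $\phi_N(x,r)=\exp_x(-r\nu)$ with $\nu$ the unit exterior normal, and $r_{\max,N}$ is the supremum of $r_0$ for which $\phi_N$ is a diffeomorphism of $N\times[0,r_0)$ onto its image. $\{\cdot,\cdot\}$ is the Poisson bracket on $T^*\Omega_N$. Here $\sup_{\{g(t,x',\xi')=1\}}\partial_tg$ is taken over $x'\in N$ and $\xi'$ with $g(t,x',\xi')=1$. *)

theory Defs
  imports "HOL-Analysis.Analysis"
begin

definition sint :: "real \<Rightarrow> real \<Rightarrow> (real \<Rightarrow> real) \<Rightarrow> real" where
  "sint a b h = (if a \<le> b then integral {a..b} h else - integral {b..a} h)"

definition psiN :: "(real \<Rightarrow> real) \<Rightarrow> real \<Rightarrow> real" where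
  "psiN f t = sint 0 t (\<lambda>s. exp (1/2 * sint 0 s f))"

definition smooth_fun :: "(real \<Rightarrow> real) \<Rightarrow> bool" where
  "smooth_fun f \<longleftrightarrow> (\<forall>k. ((deriv ^^ k) f) differentiable_on UNIV)"

definition quadratic_form :: "(real^'n \<Rightarrow> real) \<Rightarrow> bool" where
  "quadratic_form q \<longleftrightarrow> (\<exists>A::real^'n^'n. \<forall>v. q v = v \<bullet> (A *v v))"

text \<open>Complexification of a quadratic form q evaluated at u + i v:
  q(u) - q(v) + 2 i B(u,v), with B the polarisation of q.\<close>
definition qcomplex :: "('v::real_vector \<Rightarrow> real) \<Rightarrow> 'v \<Rightarrow> 'v \<Rightarrow> complex" where
  "qcomplex q u v = Complex (q u - q v) ((q (u + v) - q (u - v)) / 2)"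

text \<open>Fermi coordinates: x = (x', x_{n+1}), xi = (xi', xi_{n+1}).
  p(x, xi + i eta) = (xi_{n+1} + i eta_{n+1})^2 + g(x_{n+1}, x', xi' + i eta'),
  the (complexified) principal symbol p(x,xi) = xi_{n+1}^2 + g(x,xi').\<close>
definition p_fermi :: "(real \<Rightarrow> real^'n \<Rightarrow> real^'n \<Rightarrow> real) \<Rightarrow> ((real^'n) \<times> real)
    \<Rightarrow> ((real^'n) \<times> real) \<Rightarrow> ((real^'n) \<times> real) \<Rightarrow> complex" where
  "p_fermi g x \<xi> \<eta> = (Complex (snd \<xi>) (snd \<eta>))^2 + qcomplex (g (snd x) (fst x)) (fst \<xi>) (fst \<eta>)"

definition p_psi :: "(real \<Rightarrow> real^'n \<Rightarrow> real^'n \<Rightarrow> real) \<Rightarrow> (real \<Rightarrow> real)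
    \<Rightarrow> ((real^'n) \<times> real) \<Rightarrow> ((real^'n) \<times> real) \<Rightarrow> complex" where
  "p_psi g f x \<xi> = p_fermi g x \<xi> (0, deriv (psiN f) (snd x))"

definition poisson :: "('a::euclidean_space \<Rightarrow> 'a \<Rightarrow> real) \<Rightarrow> ('a \<Rightarrow> 'a \<Rightarrow> real) \<Rightarrow> 'a \<Rightarrow> 'a \<Rightarrow> real" where
  "poisson a b x \<xi> = (\<Sum>e\<in>Basis.
      frechet_derivative (\<lambda>\<eta>. a x \<eta>) (at \<xi>) e * frechet_derivative (\<lambda>y. b y \<xi>) (at x) e
    - frechet_derivative (\<lambda>y. a y \<xi>) (at x) e * frechet_derivative (\<lambda>\<eta>. b x \<eta>) (at \<xi>) e)"

end

theory Submission
  imports Defs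
begin

text \<open>Write \<open>\<phi> = psiN' = exp (1/2 \<integral>\<^sub>0\<^sup>t f)\<close> and \<open>\<tau>\<close> for the normal covector component. Then
  \<open>Re p_psi = \<tau>\<^sup>2 - \<phi>\<^sup>2 + g(\<xi>')\<close> and \<open>Im p_psi = 2 \<tau> \<phi>\<close>, so on the characteristic set \<open>\<tau> = 0\<close> and
  \<open>g(\<xi>') = \<phi>\<^sup>2\<close>. There the bracket reduces to \<open>-2\<phi> \<partial>\<^sub>t Re p_psi = 2\<phi> (\<phi>\<^sup>2 f - \<partial>\<^sub>t g(\<xi>'))\<close>, and
  homogeneity gives \<open>\<partial>\<^sub>t g(\<xi>') = \<phi>\<^sup>2 \<partial>\<^sub>t g(\<xi>'/\<phi>)\<close> with \<open>g(\<xi>'/\<phi>) = 1\<close>. Hence the bracket equals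
  \<open>2\<phi>\<^sup>3 (f - \<partial>\<^sub>t g(\<xi>'/\<phi>)) \<ge> 2\<delta>\<phi>\<^sup>3\<close>, and \<open>\<phi>\<close> is bounded below on the compact interval \<open>[0, r]\<close>.\<close>

lemma sint_eq_integral_diff:
  fixes h :: "real \<Rightarrow> real"
  assumes "continuous_on UNIV h" and "a \<le> 0" and "a \<le> u"
  shows "sint 0 u h = integral {a..u} h - integral {a..0} h"
proof -
  have integrable: "h integrable_on {a..b}" for b
    using assms(1) by (auto intro: integrable_continuous_interval continuous_on_subset)
  show ?thesis
  proof (cases "0 \<le> u")
    case True
    then have "integral {a..0} h + integral {0..u} h = integral {a..u} h"
      using assms(2) by (intro Henstock_Kurzweil_Integration.integral_combine integrable)
    then show ?thesis using True unfolding sint_def by simp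
  next
    case False
    then have "integral {a..u} h + integral {u..0} h = integral {a..0} h"
      using assms(3) by (intro Henstock_Kurzweil_Integration.integral_combine integrable) auto
    then show ?thesis using False unfolding sint_def by simp
  qed
qed

lemma sint_has_real_derivative:
  fixes h :: "real \<Rightarrow> real"
  assumes c: "continuous_on UNIV h"
  shows "((\<lambda>u. sint 0 u h) has_real_derivative h s) (at s)"
proof -
  define a where "a = - \<bar>s\<bar> - 1"
  define b where "b = \<bar>s\<bar> + 1"
  have s: "s \<in> interior {a..b}"
    unfolding a_def b_def by (simp add: abs_if)
  have "continuous_on {a..b} h"
    using c by (rule continuous_on_subset) simp
  from integral_has_real_derivative[OF this interior_subset[THEN subsetD, OF s]]
  have "((\<lambda>x. integral {a..x} h) has_real_derivative h s) (at s)"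
    using s by (simp only: at_within_interior)
  then have diff: "((\<lambda>x. integral {a..x} h - integral {a..0} h) has_real_derivative h s) (at s)"
    by (rule DERIV_diff[where E=0, simplified]) (rule DERIV_const)
  have "eventually (\<lambda>x. x \<in> {a<..}) (nhds s)"
    by (rule eventually_nhds_in_open) (auto simp: a_def)
  then have "eventually (\<lambda>x. sint 0 x h = integral {a..x} h - integral {a..0} h) (nhds s)"
    by (rule eventually_mono) (auto simp: a_def intro!: sint_eq_integral_diff[OF c])
  then show ?thesis
    using diff by (subst DERIV_cong_ev[where g="\<lambda>x. integral {a..x} h - integral {a..0} h"]) auto
qed

lemma quadratic_form_scaleR:
  assumes "quadratic_form q"
  shows "q (c *\<^sub>R v) = c\<^sup>2 * q v"
  using assms unfolding quadratic_form_def
  by (auto simp: matrix_vector_mult_scaleR power2_eq_square)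

lemma quadratic_form_zero:
  assumes "quadratic_form q" shows "q 0 = 0"
  using quadratic_form_scaleR[OF assms, of 0 0] by simp

lemma has_real_derivative_unique_right:
  fixes h1 h2 :: "real \<Rightarrow> real"
  assumes "(h1 has_real_derivative d1) (at t)" and "(h2 has_real_derivative d2) (at t)"
    and "0 < e" and "\<forall>s\<in>{t..<t+e}. h1 s = h2 s"
  shows "d1 = d2"
proof -
  let ?q = "\<lambda>y. ((h1 y - h2 y) - (h1 t - h2 t)) / (y - t)"
  have "((\<lambda>s. h1 s - h2 s) has_real_derivative d1 - d2) (at t)"
    using assms(1,2) by (rule DERIV_diff)
  then have "(?q \<longlongrightarrow> d1 - d2) (at t)"
    by (simp add: has_field_derivative_iff)
  then have limit: "(?q \<longlongrightarrow> d1 - d2) (at_right t)"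
    by (rule tendsto_within_subset) auto
  have "eventually (\<lambda>y. ?q y = 0) (at_right t)"
    unfolding eventually_at_right_field using assms(3,4) by (intro exI[of _ "t+e"]) auto
  then have "(?q \<longlongrightarrow> 0) (at_right t)"
    by (rule tendsto_eventually)
  from tendsto_unique[OF _ limit this] show ?thesis
    by simp
qed

lemma has_real_derivative_partial_snd:
  fixes G :: "'a::real_normed_vector \<times> real \<Rightarrow> real"
  assumes "(G has_derivative L) (at (x', t))"
  shows "((\<lambda>s. G (x', s)) has_real_derivative L (0, 1)) (at t)"
proof -
  have "((\<lambda>s. G (x', s)) has_derivative (\<lambda>h. L (0, h))) (at t)"
    using has_derivative_compose[OF has_derivative_Pair[OF has_derivative_const has_derivative_ident] assms]
    by simp
  moreover have "(\<lambda>h. L (0, h)) = (*) (L (0, 1))"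
  proof
    fix h :: real
    have "L (0, h) = L (h *\<^sub>R (0, 1))" by simp
    also have "\<dots> = L (0, 1) * h"
      by (simp only: linear_scale[OF has_derivative_linear[OF assms]] real_scaleR_def mult.commute)
    finally show "L (0, h) = L (0, 1) * h" .
  qed
  ultimately show ?thesis
    by (simp add: has_field_derivative_def)
qed

lemma differentiable_partial_snd:
  fixes G :: "'a::real_normed_vector \<times> real \<Rightarrow> real"
  assumes "G differentiable (at (x', t))"
  shows "(\<lambda>s. G (x', s)) differentiable (at t)"
  using assms has_real_derivative_partial_snd
  by (metis differentiable_def real_differentiable_def)

lemma sum_Basis_times_snd:
  fixes L :: "'a::euclidean_space \<times> real \<Rightarrow> real"
  assumes "linear L"
  shows "(\<Sum>e\<in>Basis. L e * snd e) = L (0, 1)"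
proof -
  have "L (0, 1) = L (\<Sum>b\<in>Basis. ((0::'a, 1::real) \<bullet> b) *\<^sub>R b)"
    by (simp only: euclidean_representation)
  also have "\<dots> = (\<Sum>b\<in>Basis. L b * snd b)"
    using assms by (simp add: linear_sum linear_scale inner_prod_def mult.commute)
  finally show ?thesis by simp
qed

lemma has_real_derivative_exp_half_sint:
  assumes "continuous_on UNIV f"
  shows "((\<lambda>s. exp (sint 0 s f / 2)) has_real_derivative exp (sint 0 s f / 2) * (f s / 2)) (at s)"
  using sint_has_real_derivative[OF assms] by (auto intro!: derivative_eq_intros)

lemma deriv_psiN:
  assumes "continuous_on UNIV f"
  shows "deriv (psiN f) = (\<lambda>s. exp (sint 0 s f / 2))"
proof -
  have "continuous_on UNIV (\<lambda>s. exp (sint 0 s f / 2))"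
    using has_real_derivative_exp_half_sint[OF assms]
    by (meson DERIV_isCont continuous_at_imp_continuous_on)
  from sint_has_real_derivative[OF this]
  show ?thesis
    unfolding psiN_def by (auto intro!: DERIV_imp_deriv)
qed

lemma deriv_psiN_lower_bound:
  assumes "continuous_on UNIV f"
  obtains m where "0 < m" and "\<And>t. t \<in> {a..b} \<Longrightarrow> m \<le> deriv (psiN f) t"
proof -
  have "continuous_on {a..b} (\<lambda>t. sint 0 t f)"
    using sint_has_real_derivative[OF assms]
    by (meson DERIV_isCont continuous_at_imp_continuous_on)
  then have "bounded ((\<lambda>t. sint 0 t f) ` {a..b})"
    by (intro compact_imp_bounded compact_continuous_image) auto
  then obtain B where B: "\<And>t. t \<in> {a..b} \<Longrightarrow> \<bar>sint 0 t f\<bar> \<le> B"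
    unfolding bounded_iff real_norm_def by (meson image_eqI)
  show ?thesis
  proof (rule that)
    fix t assume "t \<in> {a..b}"
    then show "exp (- B / 2) \<le> deriv (psiN f) t"
      using B[of t] by (simp add: deriv_psiN[OF assms])
  qed simp
qed

lemma Re_p_psi:
  "Re (p_psi g f x \<eta>) = (snd \<eta>)\<^sup>2 - (deriv (psiN f) (snd x))\<^sup>2 + g (snd x) (fst x) (fst \<eta>) - g (snd x) (fst x) 0"
  unfolding p_psi_def p_fermi_def qcomplex_def by (simp add: power2_eq_square)

lemma Im_p_psi:
  "Im (p_psi g f x \<eta>) = 2 * snd \<eta> * deriv (psiN f) (snd x)"
  unfolding p_psi_def p_fermi_def qcomplex_def by (simp add: power2_eq_square)

lemma p_psi_eq_0_iff:
  assumes "quadratic_form (g t x')" and "0 < deriv (psiN f) t"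
  shows "p_psi g f (x', t) (\<xi>', \<tau>) = 0 \<longleftrightarrow> \<tau> = 0 \<and> g t x' \<xi>' = (deriv (psiN f) t)\<^sup>2"
  using assms quadratic_form_zero[OF assms(1)] by (auto simp: complex_eq_iff Re_p_psi Im_p_psi)

text \<open>The family need only be quadratic on a right neighbourhood of \<open>t\<close>, since \<open>t = 0\<close> may be
  the boundary; the derivatives are then compared through one-sided difference quotients.\<close>
lemma deriv_quadratic_form_family_scaleR:
  assumes "0 < e" and "\<forall>s\<in>{t..<t+e}. quadratic_form (q s)"
    and "(\<lambda>s. q s v) differentiable (at t)" and "(\<lambda>s. q s (c *\<^sub>R v)) differentiable (at t)"
  shows "deriv (\<lambda>s. q s (c *\<^sub>R v)) t = c\<^sup>2 * deriv (\<lambda>s. q s v) t"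
proof (rule has_real_derivative_unique_right)
  show "((\<lambda>s. q s (c *\<^sub>R v)) has_real_derivative deriv (\<lambda>s. q s (c *\<^sub>R v)) t) (at t)"
    using assms(4) by (simp add: DERIV_deriv_iff_real_differentiable)
  show "((\<lambda>s. c\<^sup>2 * q s v) has_real_derivative c\<^sup>2 * deriv (\<lambda>s. q s v) t) (at t)"
    using assms(3) by (intro DERIV_cmult) (simp add: DERIV_deriv_iff_real_differentiable)
  show "\<forall>s\<in>{t..<t+e}. q s (c *\<^sub>R v) = c\<^sup>2 * q s v"
    using assms(2) by (simp add: quadratic_form_scaleR)
qed (fact assms(1))

lemma has_derivative_Re_p_psi_normal:
  fixes g :: "real \<Rightarrow> real^'n \<Rightarrow> real^'n \<Rightarrow> real"
  assumes f: "continuous_on UNIV f" and "0 < e" and quad: "\<forall>s\<in>{t..<t+e}. quadratic_form (g s x')"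
    and diff: "\<And>v. (\<lambda>y. g (snd y) (fst y) v) differentiable (at (x', t))"
  obtains L where "((\<lambda>y. Re (p_psi g f y (\<xi>', 0))) has_derivative L) (at (x', t))"
    and "L (0, 1) = deriv (\<lambda>s. g s x' \<xi>') t - (deriv (psiN f) t)\<^sup>2 * f t"
proof -
  define \<phi> where "\<phi> = deriv (psiN f)"
  define R where "R = (\<lambda>y. Re (p_psi g f y (\<xi>', 0)))"
  have R_eq: "R = (\<lambda>y. g (snd y) (fst y) \<xi>' - (\<phi> (snd y))\<^sup>2 - g (snd y) (fst y) 0)"
    unfolding R_def \<phi>_def by (simp add: Re_p_psi)
  have d\<phi>: "(\<phi> has_real_derivative \<phi> s * (f s / 2)) (at s)" for s
    unfolding \<phi>_def deriv_psiN[OF f] by (rule has_real_derivative_exp_half_sint[OF f])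
  have "(\<phi> has_derivative (*) (\<phi> t * (f t / 2))) (at (snd (x', t)))"
    using d\<phi>[of t] by (simp add: has_field_derivative_def)
  from has_derivative_compose[OF has_derivative_snd[OF has_derivative_ident] this]
  have "(\<lambda>y::(real^'n) \<times> real. \<phi> (snd y)) differentiable (at (x', t))"
    by (rule differentiableI)
  then have "R differentiable (at (x', t))"
    unfolding R_eq by (intro differentiable_diff differentiable_power diff) (auto intro: differentiableI)
  then obtain L where L: "(R has_derivative L) (at (x', t))"
    by (auto simp: differentiable_def)
  have dg: "(\<lambda>s. g s x' v) differentiable (at t)" for v
    using differentiable_partial_snd[OF diff[of v]] by simp
  have "((\<lambda>s. R (x', s)) has_real_derivative
      deriv (\<lambda>s. g s x' \<xi>') t - 2 * \<phi> t * (\<phi> t * (f t / 2)) - deriv (\<lambda>s. g s x' 0) t) (at t)"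
    unfolding R_eq using dg
    by (auto intro!: derivative_eq_intros d\<phi> simp: DERIV_deriv_iff_real_differentiable)
  moreover have "((\<lambda>s. R (x', s)) has_real_derivative L (0, 1)) (at t)"
    using L by (rule has_real_derivative_partial_snd)
  moreover have "deriv (\<lambda>s. g s x' 0) t = 0"
    using deriv_quadratic_form_family_scaleR[OF \<open>0 < e\<close> quad dg dg, of 0 0] by simp
  ultimately have "L (0, 1) = deriv (\<lambda>s. g s x' \<xi>') t - (\<phi> t)\<^sup>2 * f t"
    by (auto dest: DERIV_unique simp: power2_eq_square)
  with L show ?thesis
    unfolding R_def \<phi>_def by (rule that)
qed

text \<open>For a covector with vanishing normal component, \<open>Im p_psi\<close> vanishes identically in \<open>x\<close>,
  so only the term \<open>-\<partial>\<^sub>\<xi> Im p_psi \<cdot> \<partial>\<^sub>x Re p_psi = -2 psi' \<partial>\<^sub>t Re p_psi\<close> of the bracket survives.\<close>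
lemma poisson_p_psi_normal_covector_zero:
  fixes g :: "real \<Rightarrow> real^'n \<Rightarrow> real^'n \<Rightarrow> real"
  assumes f: "continuous_on UNIV f" and "0 < e" and quad: "\<forall>s\<in>{t..<t+e}. quadratic_form (g s x')"
    and diff: "\<And>v. (\<lambda>y. g (snd y) (fst y) v) differentiable (at (x', t))"
  shows "poisson (\<lambda>x \<xi>. Re (p_psi g f x \<xi>)) (\<lambda>x \<xi>. Im (p_psi g f x \<xi>)) (x', t) (\<xi>', 0)
    = 2 * deriv (psiN f) t * ((deriv (psiN f) t)\<^sup>2 * f t - deriv (\<lambda>s. g s x' \<xi>') t)"
proof -
  define \<phi> where "\<phi> = deriv (psiN f) t"
  obtain L where L: "((\<lambda>y. Re (p_psi g f y (\<xi>', 0))) has_derivative L) (at (x', t))"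
    and L01: "L (0, 1) = deriv (\<lambda>s. g s x' \<xi>') t - \<phi>\<^sup>2 * f t"
    using has_derivative_Re_p_psi_normal[OF f \<open>0 < e\<close> quad diff] unfolding \<phi>_def by blast
  have Im_x: "frechet_derivative (\<lambda>y. Im (p_psi g f y (\<xi>', 0))) (at (x', t)) = (\<lambda>h. 0)"
    by (simp add: Im_p_psi)
  have Im_\<xi>: "((\<lambda>\<eta>. Im (p_psi g f (x', t) \<eta>)) has_derivative (\<lambda>h. 2 * snd h * \<phi>)) (at (\<xi>', 0))"
    unfolding Im_p_psi \<phi>_def by (auto intro!: derivative_eq_intros)
  have "poisson (\<lambda>x \<xi>. Re (p_psi g f x \<xi>)) (\<lambda>x \<xi>. Im (p_psi g f x \<xi>)) (x', t) (\<xi>', 0)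
      = - 2 * \<phi> * (\<Sum>e\<in>Basis. L e * snd e)"
    using frechet_derivative_at[OF L]
    unfolding poisson_def Im_x frechet_derivative_at[OF Im_\<xi>, symmetric]
    by (simp add: sum_distrib_left algebra_simps)
  also have "\<dots> = - 2 * \<phi> * L (0, 1)"
    using sum_Basis_times_snd[OF has_derivative_linear[OF L]] by simp
  finally show ?thesis
    unfolding L01 \<phi>_def by (simp add: algebra_simps power2_eq_square)
qed

lemma poisson_p_psi_lower_bound_on_char:
  fixes g :: "real \<Rightarrow> real^'n \<Rightarrow> real^'n \<Rightarrow> real"
  assumes f: "continuous_on UNIV f" and "0 < e" and quad: "\<forall>s\<in>{t..<t+e}. quadratic_form (g s x')"
    and diff: "\<And>v. (\<lambda>y. g (snd y) (fst y) v) differentiable (at (x', t))"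
    and "0 < deriv (psiN f) t"
    and sup: "\<And>v. g t x' v = 1 \<Longrightarrow> deriv (\<lambda>s. g s x' v) t \<le> S"
    and "\<delta> \<le> f t - S"
    and char: "p_psi g f (x', t) \<xi> = 0"
  shows "2 * \<delta> * (deriv (psiN f) t) ^ 3
    \<le> poisson (\<lambda>x \<xi>. Re (p_psi g f x \<xi>)) (\<lambda>x \<xi>. Im (p_psi g f x \<xi>)) (x', t) \<xi>"
proof -
  obtain \<xi>' \<tau> where \<xi>: "\<xi> = (\<xi>', \<tau>)" by fastforce
  define \<phi> where "\<phi> = deriv (psiN f) t"
  have "quadratic_form (g t x')"
    using quad \<open>0 < e\<close> by simp
  then have "\<tau> = 0" and g\<xi>': "g t x' \<xi>' = \<phi>\<^sup>2"
    using char p_psi_eq_0_iff[of g t x' f \<xi>' \<tau>] \<open>0 < deriv (psiN f) t\<close>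
    by (simp_all add: \<xi> \<phi>_def)
  define w where "w = (1 / \<phi>) *\<^sub>R \<xi>'"
  have "\<xi>' = \<phi> *\<^sub>R w"
    using \<open>0 < deriv (psiN f) t\<close> by (simp add: w_def \<phi>_def)
  have "g t x' w = 1"
    using g\<xi>' \<open>quadratic_form (g t x')\<close> \<open>0 < deriv (psiN f) t\<close>
    by (simp add: w_def \<phi>_def quadratic_form_scaleR power2_eq_square)
  then have "deriv (\<lambda>s. g s x' w) t \<le> S"
    by (rule sup)
  moreover have "deriv (\<lambda>s. g s x' \<xi>') t = \<phi>\<^sup>2 * deriv (\<lambda>s. g s x' w) t"
    unfolding \<open>\<xi>' = \<phi> *\<^sub>R w\<close>
    using differentiable_partial_snd[OF diff]
    by (intro deriv_quadratic_form_family_scaleR[OF \<open>0 < e\<close> quad]) simp_all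
  ultimately have "\<delta> * \<phi>\<^sup>2 \<le> \<phi>\<^sup>2 * f t - deriv (\<lambda>s. g s x' \<xi>') t"
    using \<open>\<delta> \<le> f t - S\<close> mult_left_mono[of "\<delta> + deriv (\<lambda>s. g s x' w) t" "f t" "\<phi>\<^sup>2"]
    by (simp add: algebra_simps)
  then have "2 * \<phi> * (\<delta> * \<phi>\<^sup>2) \<le> 2 * \<phi> * (\<phi>\<^sup>2 * f t - deriv (\<lambda>s. g s x' \<xi>') t)"
    using \<open>0 < deriv (psiN f) t\<close> by (simp add: \<phi>_def)
  then have "2 * \<delta> * \<phi> ^ 3 \<le> 2 * \<phi> * (\<phi>\<^sup>2 * f t - deriv (\<lambda>s. g s x' \<xi>') t)"
    by (simp add: power3_eq_cube power2_eq_square algebra_simps)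
  then show ?thesis
    unfolding \<xi> \<open>\<tau> = 0\<close> poisson_p_psi_normal_covector_zero[OF f \<open>0 < e\<close> quad diff]
    by (simp add: \<phi>_def)
qed

theorem mainTheorem4:
  fixes f :: "real \<Rightarrow> real" and \<delta> r :: real
  assumes "0 < \<delta>" and "0 < r" and "smooth_fun f"
  shows "\<exists>C>0. \<forall>(U :: (real^'n) set) (g :: real \<Rightarrow> real^'n \<Rightarrow> real^'n \<Rightarrow> real) (S :: real \<Rightarrow> real).
    (open U
     \<and> (\<forall>t\<in>{0..<r}. \<forall>x'\<in>U. quadratic_form (g t x') \<and> (\<forall>v. v \<noteq> 0 \<longrightarrow> 0 < g t x' v))
     \<and> (\<forall>t\<in>{0..<r}. \<forall>x'\<in>U. \<forall>\<xi>'. (\<lambda>y. g (snd y) (fst y) \<xi>') differentiable (at (x', t)))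
     \<and> (\<forall>t\<in>{0..<r}. \<forall>x'\<in>U. \<forall>\<xi>'. g t x' \<xi>' = 1 \<longrightarrow> deriv (\<lambda>s. g s x' \<xi>') t \<le> S t)
     \<and> (\<forall>t\<in>{0..<r}. \<delta> \<le> f t - S t \<and> f t - S t \<le> 2 * \<delta>))
    \<longrightarrow> (\<forall>x'\<in>U. \<forall>t\<in>{0..<r}. \<forall>\<xi>. p_psi g f (x', t) \<xi> = 0 \<longrightarrow>
          C \<le> poisson (\<lambda>x \<xi>. Re (p_psi g f x \<xi>)) (\<lambda>x \<xi>. Im (p_psi g f x \<xi>)) (x', t) \<xi>)"
proof -
  have "continuous_on UNIV f"
    using assms(3) differentiable_imp_continuous_on unfolding smooth_fun_def
    by (metis funpow_0)
  then obtain m where "0 < m" and m: "\<And>t. t \<in> {0..r} \<Longrightarrow> m \<le> deriv (psiN f) t"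
    using deriv_psiN_lower_bound by blast
  show ?thesis
  proof (intro exI[of _ "2 * \<delta> * m ^ 3"] conjI allI impI ballI)
    show "0 < 2 * \<delta> * m ^ 3"
      using \<open>0 < \<delta>\<close> \<open>0 < m\<close> by simp
    fix U :: "(real^'n) set" and g :: "real \<Rightarrow> real^'n \<Rightarrow> real^'n \<Rightarrow> real" and S x' t \<xi>
    assume hyps: "open U
       \<and> (\<forall>t\<in>{0..<r}. \<forall>x'\<in>U. quadratic_form (g t x') \<and> (\<forall>v. v \<noteq> 0 \<longrightarrow> 0 < g t x' v))
       \<and> (\<forall>t\<in>{0..<r}. \<forall>x'\<in>U. \<forall>\<xi>'. (\<lambda>y. g (snd y) (fst y) \<xi>') differentiable (at (x', t)))
       \<and> (\<forall>t\<in>{0..<r}. \<forall>x'\<in>U. \<forall>\<xi>'. g t x' \<xi>' = 1 \<longrightarrow> deriv (\<lambda>s. g s x' \<xi>') t \<le> S t)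
       \<and> (\<forall>t\<in>{0..<r}. \<delta> \<le> f t - S t \<and> f t - S t \<le> 2 * \<delta>)"
      and "x' \<in> U" and t: "t \<in> {0..<r}"
      and "p_psi g f (x', t) \<xi> = 0"
    have "m \<le> deriv (psiN f) t"
      using m t by simp
    then have "2 * \<delta> * m ^ 3 \<le> 2 * \<delta> * (deriv (psiN f) t) ^ 3"
      using \<open>0 < m\<close> \<open>0 < \<delta>\<close> by (simp add: power_mono)
    also have "\<dots> \<le> poisson (\<lambda>x \<xi>. Re (p_psi g f x \<xi>)) (\<lambda>x \<xi>. Im (p_psi g f x \<xi>)) (x', t) \<xi>"
      using hyps \<open>x' \<in> U\<close> t \<open>0 < m\<close> \<open>m \<le> deriv (psiN f) t\<close> \<open>p_psi g f (x', t) \<xi> = 0\<close>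
      by (intro poisson_p_psi_lower_bound_on_char[OF \<open>continuous_on UNIV f\<close>, of "r - t" t g x' "S t"])
        auto
    finally show "2 * \<delta> * m ^ 3 \<le> \<dots>" .
  qed
qed

end
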